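(* Let $d,n,m\geq1$ be integers, and let $\mathsf{M}_1$ be an $n$-outcome POVM and $\mathsf{M}_2$ an $m$-outcome POVM on $\mathbb{C}^d$. Define $$\bar P(\mathsf{M}_1,\mathsf{M}_2)=\frac{1}{2nm}\sum_{x=1}^n\sum_{y=1}^m\big\|\mathsf{M}_1(x)+\mathsf{M}_2(y)\big\|.$$ If $\bar P(\mathsf{M}_1,\mathsf{M}_2)>\frac12\left(1+\frac{d}{nm}\right)$, then $\mathsf{M}_1$ and $\mathsf{M}_2$ are incompatible.
   Context: $\|\cdot\|$ is the operator norm. Two POVMs $\mathsf{M}_1$ (outcomes $x$) and $\mathsf{M}_2$ (outcomes $y$) are compatible if there is a POVM $\mathsf{G}$ on the product outcome set with $\sum_y\mathsf{G}(x,y)=\mathsf{M}_1(x)$ and $\sum_x\mathsf{G}(x,y)=\mathsf{M}_2(y)$; otherwise incompatible. $\bar P(\mathsf{M}_1,\mathsf{M}_2)$ is the maximum over encodings $\{\mathcal{E}(x,y)\}$ of states of the average success probability $\frac{1}{2nm}\sum_{x,y}\mathrm{tr}[\mathcal{E}(x,y)(\mathsf{M}_1(x)+\mathsf{M}_2(y))]$. *)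

theory Defs
  imports "HOL-Analysis.Analysis"
begin

text \<open>Operators on C^d are matrices complex^'d^'d, with d = CARD('d).
  Vectors complex^'d carry the Euclidean (l2) norm.\<close>

definition cinner_vec :: "complex^'d \<Rightarrow> complex^'d \<Rightarrow> complex" where
  "cinner_vec v w = (\<Sum>i\<in>UNIV. cnj (v $ i) * w $ i)"

definition hermitian_mat :: "complex^'d^'d \<Rightarrow> bool" where
  "hermitian_mat A \<longleftrightarrow> (\<forall>i j. A $ i $ j = cnj (A $ j $ i))"

definition psd_mat :: "complex^'d^'d \<Rightarrow> bool" where
  "psd_mat A \<longleftrightarrow> hermitian_mat A \<and> (\<forall>v. 0 \<le> Re (cinner_vec v (A *v v)))"

definition op_norm :: "complex^'d^'d \<Rightarrow> real" where
  "op_norm A = onorm (\<lambda>v. A *v v)"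

text \<open>An n-outcome POVM, outcomes indexed by 0..<n.\<close>
definition povm :: "nat \<Rightarrow> (nat \<Rightarrow> complex^'d^'d) \<Rightarrow> bool" where
  "povm n M \<longleftrightarrow> (\<forall>x<n. psd_mat (M x)) \<and> (\<Sum>x<n. M x) = mat 1"

definition compatible :: "nat \<Rightarrow> nat \<Rightarrow> (nat \<Rightarrow> complex^'d^'d) \<Rightarrow> (nat \<Rightarrow> complex^'d^'d) \<Rightarrow> bool" where
  "compatible n m M1 M2 \<longleftrightarrow>
     (\<exists>G :: nat \<Rightarrow> nat \<Rightarrow> complex^'d^'d.
        (\<forall>x<n. \<forall>y<m. psd_mat (G x y)) \<and> (\<Sum>x<n. \<Sum>y<m. G x y) = mat 1 \<and>
        (\<forall>x<n. (\<Sum>y<m. G x y) = M1 x) \<and> (\<forall>y<m. (\<Sum>x<n. G x y) = M2 y))"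

definition Pbar :: "nat \<Rightarrow> nat \<Rightarrow> (nat \<Rightarrow> complex^'d^'d) \<Rightarrow> (nat \<Rightarrow> complex^'d^'d) \<Rightarrow> real" where
  "Pbar n m M1 M2 = (1 / (2 * real n * real m)) * (\<Sum>x<n. \<Sum>y<m. op_norm (M1 x + M2 y))"

end

theory Submission
  imports Defs
begin

text \<open>A joint observable \<open>G\<close> refines both marginals, so \<open>M\<^sub>1(x) + M\<^sub>2(y)\<close> is the sum of \<open>G\<close>
  over the cross \<open>{x} \<times> Y \<union> X \<times> {y}\<close> plus a second copy of \<open>G(x,y)\<close>. The sum over the cross
  lies between \<open>0\<close> and the identity, so its norm is at most \<open>1\<close>, while the positive operator
  \<open>G(x,y)\<close> has norm at most its trace. Summing over all \<open>(x,y)\<close> gives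
  \<open>\<Sum>\<^sub>x\<^sub>,\<^sub>y \<parallel>M\<^sub>1(x) + M\<^sub>2(y)\<parallel> \<le> nm + tr 1 = nm + d\<close>, that is, \<open>Pbar \<le> (1 + d/(nm))/2\<close>.\<close>

lemma Re_cinner_vec_self: "Re (cinner_vec v v) = (norm (v :: complex^'d))\<^sup>2"
proof -
  have "Re (cinner_vec v v) = (\<Sum>i\<in>UNIV. (cmod (v $ i))\<^sup>2)"
    unfolding cinner_vec_def Re_sum
    by (intro sum.cong refl) (simp add: cmod_power2, simp add: power2_eq_square)
  also have "\<dots> = (norm v)\<^sup>2"
    unfolding norm_vec_def L2_set_def by (simp add: sum_nonneg)
  finally show ?thesis .
qed

lemma cinner_vec_add_left: "cinner_vec (u + v) w = cinner_vec u w + cinner_vec v w"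
  unfolding cinner_vec_def by (simp add: distrib_right sum.distrib)

lemma cinner_vec_add_right: "cinner_vec w (u + v) = cinner_vec w u + cinner_vec w v"
  unfolding cinner_vec_def by (simp add: distrib_left sum.distrib)

lemma cinner_vec_scale_left: "cinner_vec (c *s u) w = cnj c * cinner_vec u w"
  unfolding cinner_vec_def by (simp add: sum_distrib_left mult.assoc)

lemma cinner_vec_scale_right: "cinner_vec w (c *s u) = c * cinner_vec w u"
  unfolding cinner_vec_def by (simp add: sum_distrib_left algebra_simps)

lemma cinner_vec_axis_left: "cinner_vec (axis i 1) w = w $ i"
proof -
  have "cnj (axis i 1 $ j) * w $ j = (if j = i then w $ j else 0)" for j
    by (simp add: axis_def)
  then show ?thesis by (simp add: cinner_vec_def)
qed

lemma matrix_vector_mult_axis_nth: "(A *v axis i 1) $ i = (A :: complex^'d^'d) $ i $ i"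
  unfolding matrix_vector_mult_def axis_def by (simp add: if_distrib cong: if_cong)

lemma hermitian_mat_cinner_vec_swap:
  assumes "hermitian_mat A"
  shows "cinner_vec v (A *v u) = cnj (cinner_vec u (A *v (v :: complex^'d)))"
proof -
  have conj_sym: "cnj (A $ j $ i) = A $ i $ j" for i j
    using assms unfolding hermitian_mat_def by metis
  have "cinner_vec v (A *v u) = (\<Sum>i\<in>UNIV. \<Sum>j\<in>UNIV. cnj (v $ i) * A $ i $ j * u $ j)"
    unfolding cinner_vec_def matrix_vector_mult_def by (simp add: sum_distrib_left mult.assoc)
  also have "\<dots> = (\<Sum>j\<in>UNIV. \<Sum>i\<in>UNIV. u $ j * cnj (A $ j $ i) * cnj (v $ i))"
    by (subst sum.swap) (simp add: conj_sym mult_ac)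
  also have "\<dots> = cnj (cinner_vec u (A *v v))"
    unfolding cinner_vec_def matrix_vector_mult_def cnj_sum complex_cnj_mult complex_cnj_cnj
    by (simp add: sum_distrib_left mult.assoc)
  finally show ?thesis .
qed

lemma discriminant_le_of_quadratic_nonneg:
  fixes a b c :: real
  assumes nonneg: "\<And>t. 0 \<le> a - 2 * t * b + t\<^sup>2 * b * c" and "0 \<le> b" and "0 \<le> c"
  shows "b \<le> a * c"
proof (cases "c = 0")
  case True
  show ?thesis
  proof (cases "b = 0")
    case False
    have "0 \<le> a - 2 * ((a + 1) / (2 * b)) * b" using nonneg[of "(a + 1) / (2 * b)"] True by simp
    with False show ?thesis by (simp add: field_simps)
  qed (use assms True in auto)
next
  case False
  have "0 \<le> a - 2 * (1 / c) * b + (1 / c)\<^sup>2 * b * c" by (rule nonneg)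
  then have "0 \<le> a - b / c" using False by (simp add: power2_eq_square field_simps)
  with False \<open>0 \<le> c\<close> show ?thesis by (simp add: field_simps)
qed

lemma psd_mat_cauchy_schwarz:
  assumes "psd_mat A"
  shows "(cmod (cinner_vec u (A *v v)))\<^sup>2
           \<le> Re (cinner_vec u (A *v u)) * Re (cinner_vec v (A *v (v :: complex^'d)))"
proof -
  let ?b = "cinner_vec u (A *v v)"
  have swap: "cinner_vec v (A *v u) = cnj ?b"
    using assms hermitian_mat_cinner_vec_swap unfolding psd_mat_def by blast
  have b_sq: "?b * cnj ?b = of_real ((cmod ?b)\<^sup>2)"
    by (metis complex_norm_square)
  have "0 \<le> Re (cinner_vec u (A *v u)) - 2 * t * (cmod ?b)\<^sup>2
              + t\<^sup>2 * (cmod ?b)\<^sup>2 * Re (cinner_vec v (A *v v))" for t :: real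
  proof -
    \<comment> \<open>With this scalar, the form at \<open>u + l v\<close> is a real quadratic in \<open>t\<close>.\<close>
    define l where "l = - of_real t * cnj ?b"
    have expand: "cinner_vec (u + l *s v) (A *v (u + l *s v))
      = cinner_vec u (A *v u) + l * ?b + cnj l * cnj ?b + (cnj l * l) * cinner_vec v (A *v v)"
      unfolding matrix_vector_right_distrib vector_scalar_commute cinner_vec_add_left
        cinner_vec_add_right cinner_vec_scale_left cinner_vec_scale_right swap
      by (simp add: distrib_left mult.assoc)
    have coeffs: "l * ?b = of_real (- t * (cmod ?b)\<^sup>2)"
      "cnj l * cnj ?b = of_real (- t * (cmod ?b)\<^sup>2)" "cnj l * l = of_real (t\<^sup>2 * (cmod ?b)\<^sup>2)"
      unfolding l_def using b_sq by (simp_all add: power2_eq_square mult_ac)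
    have "0 \<le> Re (cinner_vec (u + l *s v) (A *v (u + l *s v)))"
      using assms unfolding psd_mat_def by blast
    then show ?thesis
      unfolding expand coeffs by simp
  qed
  then show ?thesis
    using assms unfolding psd_mat_def by (intro discriminant_le_of_quadratic_nonneg) auto
qed

lemma psd_mat_0: "psd_mat (0 :: complex^'d^'d)"
  unfolding psd_mat_def hermitian_mat_def cinner_vec_def by simp

lemma psd_mat_1: "psd_mat (mat 1 :: complex^'d^'d)"
proof -
  have "hermitian_mat (mat 1 :: complex^'d^'d)"
    unfolding hermitian_mat_def by (simp add: mat_def)
  then show ?thesis
    unfolding psd_mat_def by (simp add: Re_cinner_vec_self)
qed

lemma psd_mat_add:
  assumes "psd_mat A" and "psd_mat B"
  shows "psd_mat (A + B :: complex^'d^'d)"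
proof -
  have "hermitian_mat (A + B)"
    using assms unfolding psd_mat_def hermitian_mat_def
    by (metis complex_cnj_add vector_add_component)
  moreover have "0 \<le> Re (cinner_vec v ((A + B) *v v))" for v
    using assms unfolding psd_mat_def
    by (simp add: matrix_vector_mult_add_rdistrib cinner_vec_add_right)
  ultimately show ?thesis
    unfolding psd_mat_def by blast
qed

lemma psd_mat_sum:
  "finite S \<Longrightarrow> (\<And>p. p \<in> S \<Longrightarrow> psd_mat (g p)) \<Longrightarrow> psd_mat (sum g S :: complex^'d^'d)"
  by (induction S rule: finite_induct) (auto intro: psd_mat_add psd_mat_0)

lemma cinner_vec_cauchy_schwarz: "cmod (cinner_vec u w) \<le> norm u * norm (w :: complex^'d)"
proof (rule power2_le_imp_le)
  show "(cmod (cinner_vec u w))\<^sup>2 \<le> (norm u * norm w)\<^sup>2"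
    using psd_mat_cauchy_schwarz[OF psd_mat_1, of u w]
    by (simp add: Re_cinner_vec_self power_mult_distrib)
qed simp

lemma le_of_sq_le_mult:
  fixes a b :: real
  assumes "a\<^sup>2 \<le> b * a" and "0 \<le> b"
  shows "a \<le> b"
proof (cases "a \<le> 0")
  case True
  with assms(2) show ?thesis by linarith
next
  case False
  with assms(1) have "a * a \<le> b * a" "0 < a" by (simp_all add: power2_eq_square)
  then show ?thesis by (rule mult_right_le_imp_le)
qed

lemma op_norm_le_1_if_psd_complement:
  assumes A: "psd_mat (A :: complex^'d^'d)" and B: "psd_mat B" and sum_1: "A + B = mat 1"
  shows "op_norm A \<le> 1"
  unfolding op_norm_def
proof (rule onorm_bound)
  have A_le_1: "Re (cinner_vec u (A *v u)) \<le> (norm u)\<^sup>2" for u :: "complex^'d"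
  proof -
    have "Re (cinner_vec u (A *v u)) + Re (cinner_vec u (B *v u))
        = Re (cinner_vec u ((A + B) *v u))"
      by (simp add: matrix_vector_mult_add_rdistrib cinner_vec_add_right)
    also have "\<dots> = (norm u)\<^sup>2"
      using sum_1 by (simp add: Re_cinner_vec_self)
    finally have "Re (cinner_vec u (A *v u)) + Re (cinner_vec u (B *v u)) = (norm u)\<^sup>2" .
    with B show ?thesis unfolding psd_mat_def by (metis le_add_same_cancel1)
  qed
  fix v :: "complex^'d"
  let ?w = "A *v v"
  have "(norm ?w)\<^sup>2 = Re (cinner_vec ?w (A *v v))"
    by (simp add: Re_cinner_vec_self)
  also have "\<dots> \<le> cmod (cinner_vec ?w (A *v v))" by (rule complex_Re_le_cmod)
  also have "\<dots> \<le> norm v * norm ?w"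
  proof (rule power2_le_imp_le)
    have "(cmod (cinner_vec ?w (A *v v)))\<^sup>2
        \<le> Re (cinner_vec ?w (A *v ?w)) * Re (cinner_vec v (A *v v))"
      using A by (rule psd_mat_cauchy_schwarz)
    also have "\<dots> \<le> (norm ?w)\<^sup>2 * (norm v)\<^sup>2"
      using A unfolding psd_mat_def by (intro mult_mono A_le_1) auto
    finally show "(cmod (cinner_vec ?w (A *v v)))\<^sup>2 \<le> (norm v * norm ?w)\<^sup>2"
      by (simp add: power_mult_distrib mult.commute)
  qed simp
  finally have "norm ?w \<le> norm v"
    by (rule le_of_sq_le_mult) simp
  then show "norm ?w \<le> 1 * norm v" by simp
qed simp

text \<open>Componentwise Cauchy--Schwarz \<open>|(Av)\<^sub>i|\<^sup>2 \<le> A\<^sub>i\<^sub>i \<langle>v, Av\<rangle>\<close> gives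
  \<open>\<parallel>Av\<parallel>\<^sup>2 \<le> tr A \<langle>v, Av\<rangle> \<le> tr A \<parallel>v\<parallel> \<parallel>Av\<parallel>\<close>.\<close>
lemma op_norm_le_trace_if_psd:
  assumes A: "psd_mat (A :: complex^'d^'d)"
  shows "op_norm A \<le> Re (trace A)"
  unfolding op_norm_def
proof (rule onorm_bound)
  have "0 \<le> Re (A $ i $ i)" for i
  proof -
    have "0 \<le> Re (cinner_vec (axis i 1) (A *v axis i 1))"
      using A unfolding psd_mat_def by blast
    then show ?thesis by (simp add: cinner_vec_axis_left matrix_vector_mult_axis_nth)
  qed
  then show trace_nonneg: "0 \<le> Re (trace A)"
    unfolding trace_def Re_sum by (simp add: sum_nonneg)
  fix v :: "complex^'d"
  let ?R = "Re (cinner_vec v (A *v v))"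
  have "(norm (A *v v))\<^sup>2 = (\<Sum>i\<in>UNIV. (cmod ((A *v v) $ i))\<^sup>2)"
    unfolding norm_vec_def L2_set_def by (simp add: sum_nonneg)
  also have "\<dots> \<le> (\<Sum>i\<in>UNIV. Re (A $ i $ i) * ?R)"
  proof (rule sum_mono)
    fix i
    show "(cmod ((A *v v) $ i))\<^sup>2 \<le> Re (A $ i $ i) * ?R"
      using psd_mat_cauchy_schwarz[OF A, of "axis i 1" v]
      by (simp only: cinner_vec_axis_left matrix_vector_mult_axis_nth)
  qed
  also have "\<dots> = Re (trace A) * ?R"
    unfolding trace_def Re_sum by (simp add: sum_distrib_right)
  also have "\<dots> \<le> Re (trace A) * norm v * norm (A *v v)"
    unfolding mult.assoc
    using order_trans[OF complex_Re_le_cmod cinner_vec_cauchy_schwarz] trace_nonneg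
    by (rule mult_left_mono)
  finally show "norm (A *v v) \<le> Re (trace A) * norm v"
    by (rule le_of_sq_le_mult) (intro mult_nonneg_nonneg trace_nonneg norm_ge_zero)
qed

lemma trace_sum:
  "finite S \<Longrightarrow> trace (sum f S) = (\<Sum>p\<in>S. trace (f p :: 'a::comm_semiring_1^'n^'n))"
  unfolding trace_def by (simp add: sum.swap[of _ UNIV])

lemma op_norm_sum_le_1_if_psd_partition:
  fixes g :: "'a \<Rightarrow> complex^'d^'d"
  assumes "finite T" and psd: "\<And>p. p \<in> T \<Longrightarrow> psd_mat (g p)" and "sum g T = mat 1"
    and "S \<subseteq> T"
  shows "op_norm (sum g S) \<le> 1"
proof (rule op_norm_le_1_if_psd_complement)
  have "finite S"
    using \<open>finite T\<close> \<open>S \<subseteq> T\<close> by (rule finite_subset[rotated])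
  with \<open>finite T\<close> \<open>S \<subseteq> T\<close> show "psd_mat (sum g S)" "psd_mat (sum g (T - S))"
    by (auto intro!: psd_mat_sum psd)
  show "sum g S + sum g (T - S) = mat 1"
    using assms sum.subset_diff[of S T g] by (simp add: add.commute)
qed

lemma marginal_sums_eq_cross_sum:
  fixes G :: "'i \<Rightarrow> 'j \<Rightarrow> 'a::comm_monoid_add"
  assumes "finite X" "finite Y" "x \<in> X" "y \<in> Y"
  shows "(\<Sum>y'\<in>Y. G x y') + (\<Sum>x'\<in>X. G x' y)
           = (\<Sum>(a, b)\<in>{x} \<times> Y \<union> X \<times> {y}. G a b) + G x y"
proof -
  have "(\<Sum>y'\<in>Y. G x y') + (\<Sum>x'\<in>X. G x' y)
          = (\<Sum>(a, b)\<in>{x} \<times> Y. G a b) + (\<Sum>(a, b)\<in>X \<times> {y}. G a b)"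
    by (simp add: sum.cartesian_product[symmetric])
  also have "\<dots> = (\<Sum>(a, b)\<in>{x} \<times> Y \<union> X \<times> {y}. G a b)
                  + (\<Sum>(a, b)\<in>{x} \<times> Y \<inter> X \<times> {y}. G a b)"
    using assms by (simp add: sum.union_inter)
  also have "{x} \<times> Y \<inter> X \<times> {y} = {(x, y)}"
    using assms by auto
  finally show ?thesis by simp
qed

lemma op_norm_marginal_sum_le:
  fixes G :: "nat \<Rightarrow> nat \<Rightarrow> complex^'d^'d"
  assumes "\<forall>x<n. \<forall>y<m. psd_mat (G x y)" and "(\<Sum>x<n. \<Sum>y<m. G x y) = mat 1"
    and "x < n" and "y < m"
  shows "op_norm ((\<Sum>y'<m. G x y') + (\<Sum>x'<n. G x' y)) \<le> 1 + Re (trace (G x y))"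
proof -
  let ?cross = "\<Sum>(a, b)\<in>{x} \<times> {..<m} \<union> {..<n} \<times> {y}. G a b"
  have "op_norm ?cross \<le> 1"
    using assms by (intro op_norm_sum_le_1_if_psd_partition[where T = "{..<n} \<times> {..<m}"])
      (auto simp: sum.cartesian_product)
  moreover have "op_norm (G x y) \<le> Re (trace (G x y))"
    using assms by (simp add: op_norm_le_trace_if_psd)
  moreover have "op_norm (?cross + G x y) \<le> op_norm ?cross + op_norm (G x y)"
    unfolding op_norm_def matrix_vector_mult_add_rdistrib by (rule onorm_triangle) simp_all
  ultimately show ?thesis
    using assms by (simp add: marginal_sums_eq_cross_sum)
qed

lemma compatible_sum_op_norm_le:
  fixes M1 M2 :: "nat \<Rightarrow> complex^'d^'d"
  assumes "compatible n m M1 M2"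
  shows "(\<Sum>x<n. \<Sum>y<m. op_norm (M1 x + M2 y)) \<le> real n * real m + real CARD('d)"
proof -
  obtain G :: "nat \<Rightarrow> nat \<Rightarrow> complex^'d^'d" where
    psd: "\<forall>x<n. \<forall>y<m. psd_mat (G x y)" and total: "(\<Sum>x<n. \<Sum>y<m. G x y) = mat 1"
    and M1: "\<forall>x<n. (\<Sum>y<m. G x y) = M1 x" and M2: "\<forall>y<m. (\<Sum>x<n. G x y) = M2 y"
    using assms unfolding compatible_def by blast
  have "(\<Sum>x<n. \<Sum>y<m. op_norm (M1 x + M2 y)) \<le> (\<Sum>x<n. \<Sum>y<m. 1 + Re (trace (G x y)))"
    using op_norm_marginal_sum_le[OF psd total] M1 M2 by (intro sum_mono) simp
  also have "\<dots> = real n * real m + Re (trace (\<Sum>x<n. \<Sum>y<m. G x y))"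
    by (simp add: sum.distrib trace_sum)
  finally show ?thesis
    unfolding total trace_I by simp
qed

theorem proposition3:
  fixes M1 M2 :: "nat \<Rightarrow> complex^'d^'d" and n m :: nat
  assumes "n \<ge> 1" and "m \<ge> 1"
    and "povm n M1" and "povm m M2"
    and "Pbar n m M1 M2 > (1/2) * (1 + real CARD('d) / (real n * real m))"
  shows "\<not> compatible n m M1 M2"
proof
  assume "compatible n m M1 M2"
  then have "Pbar n m M1 M2 \<le> (1 / (2 * real n * real m)) * (real n * real m + real CARD('d))"
    unfolding Pbar_def
    by (intro mult_left_mono compatible_sum_op_norm_le) (simp_all add: zero_le_mult_iff)
  also have "\<dots> = (1/2) * (1 + real CARD('d) / (real n * real m))"
    using assms(1,2) by (simp add: field_simps)
  finally show False
    using assms(5) by simp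
qed

end
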